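(* Let $(X,d)$ be a complete metric space and let $T:X\to X$ be a mapping for which there exists $\gamma\in[0,\tfrac12)$ such that $$d(Tx,T^2x)+d(T^2x,Ty)+d(Ty,Tx)\le \gamma\,[\,d(x,Ty)+d(y,Tx)+d(x,T^2x)+d(y,T^2x)+d(Tx,Ty)\,]$$ for all $x,y\in X$ with $x\neq y$ and $y\neq Tx$ (i.e. $T$ is a generalized orbital triangular Chatterjea contraction). Suppose that $T$ has no periodic points of prime period $2$. Then $T$ has a unique fixed point.
   Context: A point $x\in X$ is a periodic point of period $n$ of $T$ if $T^n x=x$; the least positive integer $n$ with $T^nx=x$ is its prime period. Thus "no periodic points of prime period $2$" means there is no $x\in X$ with $T^2x=x$ and $Tx\neq x$. The condition "$x\neq y\neq Tx$" in the paper means $x\neq y$ and $y\neq Tx$. *)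

theory Defs
  imports "HOL-Analysis.Analysis"
begin

end

theory Submission
  imports Defs
begin

(* Applied with y = T (T x), the contraction bounds the perimeter P(T x) of the orbit
   triangle T x, T^2 x, T^3 x by gamma (P(x) + P(T x)), using the triangle inequality on
   the right-hand side; hence P(T x) <= gamma/(1 - gamma) P(x), a ratio < 1. Its side
   conditions x <> y, y <> T x fail only at fixed points and 2-cycles, so for a map without
   these, consecutive distances along an orbit decay geometrically, the orbit is Cauchy, and
   passing to the limit in the contraction at (x_n, z) shows that its limit z is fixed after
   all. Two fixed points u <> v would give 2 d(u,v) <= 4 gamma d(u,v). *)

lemma dist_le_sum_dist_Suc:
  fixes z :: "nat \<Rightarrow> 'a::metric_space"
  assumes "m \<le> n"
  shows "dist (z m) (z n) \<le> (\<Sum>k=m..<n. dist (z k) (z (Suc k)))"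
  using assms
proof (induction n rule: dec_induct)
  case base
  show ?case by simp
next
  case (step n)
  have "dist (z m) (z (Suc n)) \<le> dist (z m) (z n) + dist (z n) (z (Suc n))"
    by (rule dist_triangle)
  also have "\<dots> \<le> (\<Sum>k=m..<Suc n. dist (z k) (z (Suc k)))"
    using step by simp
  finally show ?case .
qed

lemma Cauchy_if_summable_dist_Suc:
  fixes z :: "nat \<Rightarrow> 'a::metric_space"
  assumes "summable (\<lambda>n. dist (z n) (z (Suc n)))"
  shows "Cauchy z"
  unfolding Cauchy_altdef
proof (intro allI impI)
  fix e :: real
  assume "e > 0"
  then obtain N where N: "\<And>m n. m \<ge> N \<Longrightarrow> norm (\<Sum>k=m..<n. dist (z k) (z (Suc k))) < e"
    using assms summable_Cauchy by metis
  have "dist (z m) (z n) < e" if "m \<ge> N" "n > m" for m n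
    using dist_le_sum_dist_Suc[of m n z] N[of m n] that by simp
  then show "\<exists>M. \<forall>m\<ge>M. \<forall>n>m. dist (z m) (z n) < e"
    by blast
qed

locale orbital_triangular_chatterjea =
  fixes T :: "'a::metric_space \<Rightarrow> 'a" and \<gamma> :: real
  assumes gamma_nonneg: "0 \<le> \<gamma>" and gamma_less_half: "\<gamma> < 1/2"
    and contraction: "\<And>x y. x \<noteq> y \<Longrightarrow> y \<noteq> T x \<Longrightarrow>
        dist (T x) (T (T x)) + dist (T (T x)) (T y) + dist (T y) (T x)
        \<le> \<gamma> * (dist x (T y) + dist y (T x) + dist x (T (T x)) + dist y (T (T x)) + dist (T x) (T y))"
begin

lemma fixed_point_unique:
  assumes "T u = u" "T v = v"
  shows "u = v"
proof (rule ccontr)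
  assume "u \<noteq> v"
  then have "2 * dist u v \<le> \<gamma> * (4 * dist u v)"
    using contraction[of u v] assms by (simp add: dist_commute)
  moreover have "\<gamma> * (4 * dist u v) < 2 * dist u v"
    using \<open>u \<noteq> v\<close> gamma_less_half by simp
  ultimately show False
    by linarith
qed

definition orbit_perimeter :: "'a \<Rightarrow> real" where
  "orbit_perimeter x = dist x (T x) + dist (T x) (T (T x)) + dist (T (T x)) x"

lemma orbit_perimeter_step:
  assumes "x \<noteq> T (T x)" "T (T x) \<noteq> T x"
  shows "orbit_perimeter (T x) \<le> \<gamma> / (1 - \<gamma>) * orbit_perimeter x"
proof -
  let ?a = "x" and ?b = "T x" and ?c = "T (T x)" and ?d = "T (T (T x))"
  have "orbit_perimeter ?b
      \<le> \<gamma> * (dist ?a ?d + dist ?c ?b + dist ?a ?c + dist ?c ?c + dist ?b ?d)"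
    using contraction[OF assms] by (simp add: orbit_perimeter_def dist_commute)
  also have "\<dots> \<le> \<gamma> * (orbit_perimeter ?a + orbit_perimeter ?b)"
  proof (rule mult_left_mono[OF _ gamma_nonneg])
    have "dist ?a ?d \<le> dist ?a ?b + dist ?b ?d" "dist ?b ?d \<le> dist ?b ?c + dist ?c ?d"
      by (rule dist_triangle)+
    then show "dist ?a ?d + dist ?c ?b + dist ?a ?c + dist ?c ?c + dist ?b ?d
        \<le> orbit_perimeter ?a + orbit_perimeter ?b"
      by (simp add: orbit_perimeter_def dist_commute)
  qed
  finally have "(1 - \<gamma>) * orbit_perimeter ?b \<le> \<gamma> * orbit_perimeter ?a"
    by (simp add: algebra_simps)
  then show ?thesis
    using gamma_less_half by (simp add: field_simps)
qed

lemma orbit_perimeter_funpow_le: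
  assumes no_2_cycle: "\<And>y. T (T y) \<noteq> y"
  shows "orbit_perimeter ((T ^^ n) a) \<le> (\<gamma> / (1 - \<gamma>)) ^ n * orbit_perimeter a"
proof (induction n)
  case 0
  show ?case by simp
next
  case (Suc n)
  let ?x = "(T ^^ n) a"
  have "T (T ?x) \<noteq> T ?x"
    using no_2_cycle[of "T ?x"] by metis
  then have "orbit_perimeter (T ?x) \<le> \<gamma> / (1 - \<gamma>) * orbit_perimeter ?x"
    using orbit_perimeter_step no_2_cycle by metis
  also have "\<dots> \<le> \<gamma> / (1 - \<gamma>) * ((\<gamma> / (1 - \<gamma>)) ^ n * orbit_perimeter a)"
    using Suc gamma_nonneg gamma_less_half by (intro mult_left_mono) auto
  finally show ?case
    by simp
qed

lemma Cauchy_orbit: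
  assumes "\<And>y. T (T y) \<noteq> y"
  shows "Cauchy (\<lambda>n. (T ^^ n) a)"
proof (rule Cauchy_if_summable_dist_Suc)
  have "summable (\<lambda>n. (\<gamma> / (1 - \<gamma>)) ^ n * orbit_perimeter a)"
    using gamma_nonneg gamma_less_half by (intro summable_mult2 summable_geometric) simp
  moreover have "dist ((T ^^ n) a) ((T ^^ Suc n) a) \<le> orbit_perimeter ((T ^^ n) a)" for n
    by (simp add: orbit_perimeter_def)
  then have "norm (dist ((T ^^ n) a) ((T ^^ Suc n) a)) \<le> (\<gamma> / (1 - \<gamma>)) ^ n * orbit_perimeter a" for n
    using order_trans orbit_perimeter_funpow_le[OF assms, of n a] by fastforce
  ultimately show "summable (\<lambda>n. dist ((T ^^ n) a) ((T ^^ Suc n) a))"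
    by (rule summable_comparison_test')
qed

lemma orbit_limit_is_fixed_point:
  assumes "(\<lambda>n. (T ^^ n) a) \<longlonglongrightarrow> z"
  shows "T z = z"
proof (rule ccontr)
  assume "T z \<noteq> z"
  define D where "D = dist z (T z)"
  define x where "x = (\<lambda>n. (T ^^ n) a)"
  have x_Suc: "T (x n) = x (Suc n)" for n
    by (simp add: x_def)
  have lim0: "x \<longlonglongrightarrow> z"
    using assms by (simp add: x_def)
  have lim1: "(\<lambda>n. x (Suc n)) \<longlonglongrightarrow> z"
    using lim0 by (rule LIMSEQ_Suc)
  have lim2: "(\<lambda>n. x (Suc (Suc n))) \<longlonglongrightarrow> z"
    using lim1 by (rule LIMSEQ_Suc)
  have "D > 0"
    using \<open>T z \<noteq> z\<close> by (simp add: D_def)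
  have "(\<lambda>n. dist (x n) (x (Suc n))) \<longlonglongrightarrow> 0"
    by (auto intro!: tendsto_eq_intros lim0 lim1)
  then have "eventually (\<lambda>n. dist (x n) (x (Suc n)) < D) sequentially"
    using \<open>D > 0\<close> by (rule order_tendstoD)
  \<comment> \<open>\<open>x n = z\<close> would put \<open>x (Suc n) = T z\<close> at distance \<open>D\<close> from \<open>x n\<close>\<close>
  then have away: "eventually (\<lambda>n. x n \<noteq> z) sequentially"
    by (rule eventually_mono) (auto simp: D_def x_Suc[symmetric])
  moreover have "eventually (\<lambda>n. x (Suc n) \<noteq> z) sequentially"
    using away by (rule eventually_sequentially_Suc[THEN iffD2])
  ultimately have "eventually (\<lambda>n.
      dist (x (Suc n)) (x (Suc (Suc n))) + dist (x (Suc (Suc n))) (T z) + dist (T z) (x (Suc n))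
      \<le> \<gamma> * (dist (x n) (T z) + dist z (x (Suc n)) + dist (x n) (x (Suc (Suc n)))
             + dist z (x (Suc (Suc n))) + dist (x (Suc n)) (T z))) sequentially"
  proof eventually_elim
    case (elim n)
    then show ?case
      using contraction[of "x n" z] by (simp add: x_Suc)
  qed
  moreover have "(\<lambda>n. dist (x (Suc n)) (x (Suc (Suc n))) + dist (x (Suc (Suc n))) (T z)
      + dist (T z) (x (Suc n))) \<longlonglongrightarrow> 2 * D"
    by (auto intro!: tendsto_eq_intros lim1 lim2 simp: D_def dist_commute)
  moreover have "(\<lambda>n. \<gamma> * (dist (x n) (T z) + dist z (x (Suc n)) + dist (x n) (x (Suc (Suc n)))
      + dist z (x (Suc (Suc n))) + dist (x (Suc n)) (T z))) \<longlonglongrightarrow> \<gamma> * (2 * D)"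
    by (auto intro!: tendsto_eq_intros lim0 lim1 lim2 simp: D_def)
  ultimately have "2 * D \<le> \<gamma> * (2 * D)"
    by (intro tendsto_le[OF trivial_limit_sequentially])
  moreover have "\<gamma> * (2 * D) < 2 * D"
    using \<open>D > 0\<close> gamma_less_half by simp
  ultimately show False
    by linarith
qed

end

theorem theorem5p1:
  fixes T :: "'a::complete_space \<Rightarrow> 'a" and \<gamma> :: real
  assumes gamma: "0 \<le> \<gamma>" "\<gamma> < 1/2"
    and contr: "\<And>x y. x \<noteq> y \<Longrightarrow> y \<noteq> T x \<Longrightarrow>
        dist (T x) (T (T x)) + dist (T (T x)) (T y) + dist (T y) (T x)
        \<le> \<gamma> * (dist x (T y) + dist y (T x) + dist x (T (T x)) + dist y (T (T x)) + dist (T x) (T y))"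
    and noper2: "\<not> (\<exists>x. (T ^^ 2) x = x \<and> T x \<noteq> x)"
  shows "\<exists>!x. T x = x"
proof -
  interpret orbital_triangular_chatterjea T \<gamma>
    using gamma contr by unfold_locales auto
  have "\<exists>z. T z = z"
  proof (rule ccontr)
    assume no_fixed_point: "\<nexists>z. T z = z"
    then have "T (T y) \<noteq> y" for y
      using noper2 by (metis funpow_0 funpow_Suc_right numeral_2_eq_2 o_apply)
    then have "Cauchy (\<lambda>n. (T ^^ n) undefined)"
      by (rule Cauchy_orbit)
    then obtain z where "(\<lambda>n. (T ^^ n) undefined) \<longlonglongrightarrow> z"
      by (auto simp: Cauchy_convergent_iff convergent_def)
    then have "T z = z"
      by (rule orbit_limit_is_fixed_point)
    with no_fixed_point show False
      by blast
  qed
  then show ?thesis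
    using fixed_point_unique by blast
qed

end
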